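(* Let $k\ge1$ and let $\pi_0,\dots,\pi_{k-1}$ be (possibly random) policies. Then for every $s\in\mathcal S$, $$\sum_{t=0}^{k-1}\mathbb E_{\{\pi_t\}}\big[V^{\pi_t}(s)-V^{\pi^*}(s)\big]\;\le\;(1-\gamma)^{-1}\max_{s'\in\mathcal S}\mathbb E_{\{\pi_t\}}\big[g^{\pi_{[k]}}(s')\big],$$ where the aggregated advantage gap function is $g^{\pi_{[k]}}(s):=\max_{p\in\Delta_{|\mathcal A|}}\big\{-\sum_{t=0}^{k-1}\psi^{\pi_t}(s,p)\big\}$.
   Context: An infinite-horizon discounted MDP is given by a finite state space $\mathcal S$, a finite action space $\mathcal A$, transition probabilities $\mathcal P(s'\mid s,a)$, a cost $c:\mathcal S\times\mathcal A\to\mathbb R$ and a discount factor $\gamma\in[0,1)$. $\Delta_{|\mathcal A|}$ is the probability simplex over $\mathcal A$. A policy $\pi$ assigns $\pi(\cdot\mid s)\in\Delta_{|\mathcal A|}$ to each state. For each $s$, $p\mapsto h^{p}(s)$ is a closed convex function on $\Delta_{|\mathcal A|}$ (regularizer). $V^\pi(s)=\mathbb E\big[\sum_{t\ge0}\gamma^t(c(s_t,a_t)+h^{\pi(\cdot\mid s_t)}(s_t))\mid s_0=s,\ a_t\sim\pi(\cdot\mid s_t),\ s_{t+1}\sim\mathcal P(\cdot\mid s_t,a_t)\big]$, and $Q^\pi(s,a)$ is the same with $a_0=a$. $\pi^*$ is an optimal policy: $V^{\pi^*}(s)\le V^\pi(s)$ for all $\pi$, $s$. The advantage function is $\psi^\pi(s,p):=\langle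 Q^\pi(s,\cdot),p\rangle-V^\pi(s)+h^{p}(s)-h^{\pi(\cdot\mid s)}(s)$ for $p\in\Delta_{|\mathcal A|}$. $\mathbb E_{\{\pi_t\}}$ denotes expectation over the randomness of the policies. *)

theory Defs
  imports "HOL-Analysis.Analysis" "HOL-Probability.Probability"
begin

text \<open>A distribution over actions is a vector in real^'a; P s a s' is the
  transition probability P(s'|s,a); c s a is the cost; h s p is the regularizer.\<close>

definition prob_simplex :: "(real^'a::finite) set" where
  "prob_simplex = {p. (\<forall>a. 0 \<le> p $ a) \<and> (\<Sum>a\<in>UNIV. p $ a) = 1}"

definition is_policy :: "('s \<Rightarrow> real^'a::finite) \<Rightarrow> bool" where
  "is_policy \<pi> \<longleftrightarrow> (\<forall>s. \<pi> s \<in> prob_simplex)"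

definition is_mdp :: "('s::finite \<Rightarrow> 'a::finite \<Rightarrow> 's \<Rightarrow> real) \<Rightarrow> real \<Rightarrow> bool" where
  "is_mdp P \<gamma> \<longleftrightarrow> (\<forall>s a s'. 0 \<le> P s a s') \<and> (\<forall>s a. (\<Sum>s'\<in>UNIV. P s a s') = 1)
     \<and> 0 \<le> \<gamma> \<and> \<gamma> < 1"

definition closed_fun_on :: "'b::topological_space set \<Rightarrow> ('b \<Rightarrow> real) \<Rightarrow> bool" where
  "closed_fun_on S f \<longleftrightarrow> (\<forall>c. closed {x\<in>S. f x \<le> c})"

definition trans_pol ::
  "('s::finite \<Rightarrow> 'a::finite \<Rightarrow> 's \<Rightarrow> real) \<Rightarrow> ('s \<Rightarrow> real^'a) \<Rightarrow> 's \<Rightarrow> 's \<Rightarrow> real" where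
  "trans_pol P \<pi> s s' = (\<Sum>a\<in>UNIV. \<pi> s $ a * P s a s')"

definition stage_cost ::
  "('s \<Rightarrow> 'a::finite \<Rightarrow> real) \<Rightarrow> ('s \<Rightarrow> real^'a \<Rightarrow> real) \<Rightarrow> ('s \<Rightarrow> real^'a) \<Rightarrow> 's \<Rightarrow> real" where
  "stage_cost c h \<pi> s = (\<Sum>a\<in>UNIV. \<pi> s $ a * c s a) + h s (\<pi> s)"

fun step_dist ::
  "('s::finite \<Rightarrow> 'a::finite \<Rightarrow> 's \<Rightarrow> real) \<Rightarrow> ('s \<Rightarrow> real^'a) \<Rightarrow> nat \<Rightarrow> 's \<Rightarrow> 's \<Rightarrow> real" where
  "step_dist P \<pi> 0 s s' = (if s = s' then 1 else 0)"
| "step_dist P \<pi> (Suc n) s s' = (\<Sum>s''\<in>UNIV. step_dist P \<pi> n s s'' * trans_pol P \<pi> s'' s')"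

definition V_fun ::
  "('s::finite \<Rightarrow> 'a::finite \<Rightarrow> 's \<Rightarrow> real) \<Rightarrow> ('s \<Rightarrow> 'a \<Rightarrow> real) \<Rightarrow> ('s \<Rightarrow> real^'a \<Rightarrow> real)
    \<Rightarrow> real \<Rightarrow> ('s \<Rightarrow> real^'a) \<Rightarrow> 's \<Rightarrow> real" where
  "V_fun P c h \<gamma> \<pi> s =
     (\<Sum>n. \<gamma> ^ n * (\<Sum>s'\<in>UNIV. step_dist P \<pi> n s s' * stage_cost c h \<pi> s'))"

definition Q_fun ::
  "('s::finite \<Rightarrow> 'a::finite \<Rightarrow> 's \<Rightarrow> real) \<Rightarrow> ('s \<Rightarrow> 'a \<Rightarrow> real) \<Rightarrow> ('s \<Rightarrow> real^'a \<Rightarrow> real)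
    \<Rightarrow> real \<Rightarrow> ('s \<Rightarrow> real^'a) \<Rightarrow> 's \<Rightarrow> 'a \<Rightarrow> real" where
  "Q_fun P c h \<gamma> \<pi> s a =
     c s a + h s (\<pi> s) + \<gamma> * (\<Sum>s'\<in>UNIV. P s a s' * V_fun P c h \<gamma> \<pi> s')"

definition psi_fun ::
  "('s::finite \<Rightarrow> 'a::finite \<Rightarrow> 's \<Rightarrow> real) \<Rightarrow> ('s \<Rightarrow> 'a \<Rightarrow> real) \<Rightarrow> ('s \<Rightarrow> real^'a \<Rightarrow> real)
    \<Rightarrow> real \<Rightarrow> ('s \<Rightarrow> real^'a) \<Rightarrow> 's \<Rightarrow> real^'a \<Rightarrow> real" where
  "psi_fun P c h \<gamma> \<pi> s p =
     (\<Sum>a\<in>UNIV. Q_fun P c h \<gamma> \<pi> s a * p $ a) - V_fun P c h \<gamma> \<pi> s + h s p - h s (\<pi> s)"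

definition agg_gap ::
  "('s::finite \<Rightarrow> 'a::finite \<Rightarrow> 's \<Rightarrow> real) \<Rightarrow> ('s \<Rightarrow> 'a \<Rightarrow> real) \<Rightarrow> ('s \<Rightarrow> real^'a \<Rightarrow> real)
    \<Rightarrow> real \<Rightarrow> nat \<Rightarrow> (nat \<Rightarrow> 's \<Rightarrow> real^'a) \<Rightarrow> 's \<Rightarrow> real" where
  "agg_gap P c h \<gamma> k \<pi>s s =
     (SUP p\<in>prob_simplex. - (\<Sum>t<k. psi_fun P c h \<gamma> (\<pi>s t) s p))"

end

(*
  Performance difference lemma: V^pi(s) - V^pi*(s) = - sum_y d(y) psi^pi(y, pi*(y)), where d is the
  discounted state occupancy of pi* started in s; d is nonnegative with total mass 1/(1 - gamma).
  Summing over t, the weight of each state y is - sum_t psi^{pi_t}(y, pi*(y)), which is at most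
  g^{pi_[k]}(y) because pi*(y) lies in the simplex (the supremum is finite since a closed h is bounded
  below on the compact simplex). Taking expectations and bounding E g(y) by its maximum over y gives
  the claim.
*)
theory Submission
  imports Defs
begin

lemma trans_pol_nonneg:
  assumes "is_mdp P \<gamma>" "is_policy \<pi>"
  shows "0 \<le> trans_pol P \<pi> x y"
  using assms unfolding is_mdp_def is_policy_def prob_simplex_def trans_pol_def
  by (auto intro!: sum_nonneg)

lemma sum_trans_pol:
  assumes "is_mdp P \<gamma>" "is_policy \<pi>"
  shows "(\<Sum>y\<in>UNIV. trans_pol P \<pi> x y) = 1"
proof -
  have "(\<Sum>y\<in>UNIV. trans_pol P \<pi> x y) = (\<Sum>a\<in>UNIV. \<pi> x $ a * (\<Sum>y\<in>UNIV. P x a y))"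
    unfolding trans_pol_def by (simp only: sum_distrib_left) (rule sum.swap)
  also have "\<dots> = 1"
    using assms unfolding is_mdp_def is_policy_def prob_simplex_def by simp
  finally show ?thesis .
qed

lemma step_dist_nonneg:
  assumes "is_mdp P \<gamma>" "is_policy \<pi>"
  shows "0 \<le> step_dist P \<pi> n x y"
proof (induction n arbitrary: y)
  case (Suc n)
  then show ?case by (simp add: sum_nonneg trans_pol_nonneg[OF assms])
qed simp

lemma sum_step_dist:
  assumes "is_mdp P \<gamma>" "is_policy \<pi>"
  shows "(\<Sum>y\<in>UNIV. step_dist P \<pi> n x y) = 1"
proof (induction n)
  case (Suc n)
  have "(\<Sum>y\<in>UNIV. step_dist P \<pi> (Suc n) x y)
      = (\<Sum>z\<in>UNIV. step_dist P \<pi> n x z * (\<Sum>y\<in>UNIV. trans_pol P \<pi> z y))"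
    by (simp only: step_dist.simps sum_distrib_left) (rule sum.swap)
  then show ?case using Suc sum_trans_pol[OF assms] by simp
qed simp

lemma step_dist_le_1:
  assumes "is_mdp P \<gamma>" "is_policy \<pi>"
  shows "step_dist P \<pi> n x y \<le> 1"
  using member_le_sum[of y UNIV "step_dist P \<pi> n x"]
  by (simp add: step_dist_nonneg[OF assms] sum_step_dist[OF assms])

text \<open>Not normalized: \<open>(1 - \<gamma>) * occupancy P \<pi> \<gamma> x\<close> is the discounted state visitation
  distribution of \<open>\<pi>\<close> started in \<open>x\<close>.\<close>

definition occupancy ::
  "('s::finite \<Rightarrow> 'a::finite \<Rightarrow> 's \<Rightarrow> real) \<Rightarrow> ('s \<Rightarrow> real^'a) \<Rightarrow> real \<Rightarrow> 's \<Rightarrow> 's \<Rightarrow> real" where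
  "occupancy P \<pi> \<gamma> x y = (\<Sum>n. \<gamma> ^ n * step_dist P \<pi> n x y)"

lemma sums_occupancy:
  assumes "is_mdp P \<gamma>" "is_policy \<pi>"
  shows "(\<lambda>n. \<gamma> ^ n * step_dist P \<pi> n x y) sums occupancy P \<pi> \<gamma> x y"
proof -
  have \<gamma>: "0 \<le> \<gamma>" "\<gamma> < 1" using assms(1) unfolding is_mdp_def by auto
  have "summable (\<lambda>n. \<gamma> ^ n * step_dist P \<pi> n x y)"
  proof (rule summable_comparison_test[OF _ summable_geometric[of \<gamma>]])
    show "\<exists>N. \<forall>n\<ge>N. norm (\<gamma> ^ n * step_dist P \<pi> n x y) \<le> \<gamma> ^ n"
      using \<gamma> step_dist_nonneg[OF assms] step_dist_le_1[OF assms]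
      by (auto simp: abs_mult intro!: mult_left_le)
  qed (use \<gamma> in auto)
  then show ?thesis unfolding occupancy_def by (simp add: summable_sums)
qed

lemma sums_occupancy_weighted:
  assumes "is_mdp P \<gamma>" "is_policy \<pi>"
  shows "(\<lambda>n. \<gamma> ^ n * (\<Sum>y\<in>UNIV. step_dist P \<pi> n x y * f y))
           sums (\<Sum>y\<in>UNIV. occupancy P \<pi> \<gamma> x y * f y)"
proof -
  have "(\<lambda>n. \<Sum>y\<in>UNIV. \<gamma> ^ n * step_dist P \<pi> n x y * f y)
          sums (\<Sum>y\<in>UNIV. occupancy P \<pi> \<gamma> x y * f y)"
    by (intro sums_sum sums_mult2 sums_occupancy[OF assms])
  then show ?thesis by (simp add: sum_distrib_left mult.assoc)
qed

lemma occupancy_nonneg: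
  assumes "is_mdp P \<gamma>" "is_policy \<pi>"
  shows "0 \<le> occupancy P \<pi> \<gamma> x y"
  using assms step_dist_nonneg[OF assms] unfolding is_mdp_def
  by (intro sums_le[OF _ sums_zero sums_occupancy[OF assms]]) auto

lemma sum_occupancy:
  assumes "is_mdp P \<gamma>" "is_policy \<pi>"
  shows "(\<Sum>y\<in>UNIV. occupancy P \<pi> \<gamma> x y) = 1 / (1 - \<gamma>)"
proof -
  have "(\<lambda>n. \<gamma> ^ n) sums (\<Sum>y\<in>UNIV. occupancy P \<pi> \<gamma> x y)"
    using sums_occupancy_weighted[OF assms, of x "\<lambda>_. 1"] by (simp add: sum_step_dist[OF assms])
  moreover have "(\<lambda>n. \<gamma> ^ n) sums (1 / (1 - \<gamma>))"
    using assms(1) unfolding is_mdp_def by (intro geometric_sums) auto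
  ultimately show ?thesis by (rule sums_unique2)
qed

lemma V_fun_eq_occupancy:
  assumes "is_mdp P \<gamma>" "is_policy \<pi>"
  shows "V_fun P c h \<gamma> \<pi> x = (\<Sum>y\<in>UNIV. occupancy P \<pi> \<gamma> x y * stage_cost c h \<pi> y)"
  unfolding V_fun_def by (rule sums_unique[symmetric, OF sums_occupancy_weighted[OF assms]])

lemma occupancy_balance:
  assumes "is_mdp P \<gamma>" "is_policy \<pi>"
  shows "occupancy P \<pi> \<gamma> x z
           = (if x = z then 1 else 0) + \<gamma> * (\<Sum>y\<in>UNIV. occupancy P \<pi> \<gamma> x y * trans_pol P \<pi> y z)"
proof -
  have "(\<lambda>n. \<gamma> ^ Suc n * step_dist P \<pi> (Suc n) x z)
          sums (occupancy P \<pi> \<gamma> x z - (if x = z then 1 else 0))"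
    using sums_occupancy[OF assms] by (subst sums_Suc_iff) simp
  moreover have "(\<lambda>n. \<gamma> ^ Suc n * step_dist P \<pi> (Suc n) x z)
          sums (\<gamma> * (\<Sum>y\<in>UNIV. occupancy P \<pi> \<gamma> x y * trans_pol P \<pi> y z))"
    using sums_mult[OF sums_occupancy_weighted[OF assms, of x "\<lambda>y. trans_pol P \<pi> y z"], of \<gamma>]
    by (simp add: mult_ac)
  ultimately have "occupancy P \<pi> \<gamma> x z - (if x = z then 1 else 0)
      = \<gamma> * (\<Sum>y\<in>UNIV. occupancy P \<pi> \<gamma> x y * trans_pol P \<pi> y z)"
    by (rule sums_unique2)
  then show ?thesis by simp
qed

lemma V_fun_minus_eq_occupancy:
  assumes mdp: "is_mdp P \<gamma>" and \<pi>: "is_policy \<pi>"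
  shows "V_fun P c h \<gamma> \<pi> x - W x
    = (\<Sum>y\<in>UNIV. occupancy P \<pi> \<gamma> x y *
        (stage_cost c h \<pi> y + \<gamma> * (\<Sum>z\<in>UNIV. trans_pol P \<pi> y z * W z) - W y))"
proof -
  let ?d = "occupancy P \<pi> \<gamma> x"
  have "(\<Sum>y\<in>UNIV. ?d y * (\<gamma> * (\<Sum>z\<in>UNIV. trans_pol P \<pi> y z * W z)))
      = (\<Sum>y\<in>UNIV. \<Sum>z\<in>UNIV. \<gamma> * (?d y * trans_pol P \<pi> y z) * W z)"
    by (simp add: sum_distrib_left ac_simps)
  also have "\<dots> = (\<Sum>z\<in>UNIV. \<Sum>y\<in>UNIV. \<gamma> * (?d y * trans_pol P \<pi> y z) * W z)"
    by (rule sum.swap)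
  also have "\<dots> = (\<Sum>z\<in>UNIV. (\<gamma> * (\<Sum>y\<in>UNIV. ?d y * trans_pol P \<pi> y z)) * W z)"
    by (simp only: sum_distrib_left sum_distrib_right)
  also have "\<dots> = (\<Sum>z\<in>UNIV. (?d z - (if x = z then 1 else 0)) * W z)"
  proof (rule sum.cong[OF refl])
    fix z
    have "\<gamma> * (\<Sum>y\<in>UNIV. ?d y * trans_pol P \<pi> y z) = ?d z - (if x = z then 1 else 0)"
      using occupancy_balance[OF mdp \<pi>, of x z] by linarith
    then show "\<gamma> * (\<Sum>y\<in>UNIV. ?d y * trans_pol P \<pi> y z) * W z
        = (?d z - (if x = z then 1 else 0)) * W z" by simp
  qed
  also have "\<dots> = (\<Sum>z\<in>UNIV. ?d z * W z) - W x"
    by (simp add: left_diff_distrib sum_subtractf if_distrib[where f = "\<lambda>u. u * _"] cong: if_cong)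
  finally have balance: "(\<Sum>y\<in>UNIV. ?d y * (\<gamma> * (\<Sum>z\<in>UNIV. trans_pol P \<pi> y z * W z)))
      = (\<Sum>z\<in>UNIV. ?d z * W z) - W x" .
  have "(\<Sum>y\<in>UNIV. ?d y * (stage_cost c h \<pi> y + \<gamma> * (\<Sum>z\<in>UNIV. trans_pol P \<pi> y z * W z) - W y))
      = (\<Sum>y\<in>UNIV. ?d y * stage_cost c h \<pi> y)
        + (\<Sum>y\<in>UNIV. ?d y * (\<gamma> * (\<Sum>z\<in>UNIV. trans_pol P \<pi> y z * W z)))
        - (\<Sum>y\<in>UNIV. ?d y * W y)"
    by (simp only: distrib_left right_diff_distrib sum.distrib sum_subtractf)
  then show ?thesis using balance V_fun_eq_occupancy[OF mdp \<pi>, of c h x] by linarith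
qed

lemma psi_fun_eq:
  assumes "p \<in> prob_simplex"
  shows "psi_fun P c h \<gamma> \<pi> x p =
    (\<Sum>a\<in>UNIV. p $ a * c x a) + h x p
     + \<gamma> * (\<Sum>y\<in>UNIV. (\<Sum>a\<in>UNIV. p $ a * P x a y) * V_fun P c h \<gamma> \<pi> y)
     - V_fun P c h \<gamma> \<pi> x"
proof -
  let ?V = "V_fun P c h \<gamma> \<pi>"
  have "(\<Sum>a\<in>UNIV. Q_fun P c h \<gamma> \<pi> x a * p $ a)
      = (\<Sum>a\<in>UNIV. p $ a * c x a) + h x (\<pi> x) * (\<Sum>a\<in>UNIV. p $ a)
        + \<gamma> * (\<Sum>a\<in>UNIV. p $ a * (\<Sum>y\<in>UNIV. P x a y * ?V y))"
    unfolding Q_fun_def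
    by (simp add: algebra_simps sum.distrib sum_distrib_left[symmetric] sum_distrib_right[symmetric])
  also have "(\<Sum>a\<in>UNIV. p $ a * (\<Sum>y\<in>UNIV. P x a y * ?V y))
      = (\<Sum>y\<in>UNIV. (\<Sum>a\<in>UNIV. p $ a * P x a y) * ?V y)"
    by (simp only: sum_distrib_left sum_distrib_right mult.assoc) (rule sum.swap)
  finally show ?thesis
    using assms unfolding psi_fun_def prob_simplex_def by simp
qed

theorem performance_difference:
  assumes mdp: "is_mdp P \<gamma>" and \<pi>': "is_policy \<pi>'"
  shows "V_fun P c h \<gamma> \<pi>' x - V_fun P c h \<gamma> \<pi> x
    = (\<Sum>y\<in>UNIV. occupancy P \<pi>' \<gamma> x y * psi_fun P c h \<gamma> \<pi> y (\<pi>' y))"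
proof -
  have "psi_fun P c h \<gamma> \<pi> y (\<pi>' y) = stage_cost c h \<pi>' y
     + \<gamma> * (\<Sum>z\<in>UNIV. trans_pol P \<pi>' y z * V_fun P c h \<gamma> \<pi> z) - V_fun P c h \<gamma> \<pi> y" for y
    using \<pi>' psi_fun_eq[of "\<pi>' y"]
    unfolding is_policy_def stage_cost_def trans_pol_def by simp
  then show ?thesis
    using V_fun_minus_eq_occupancy[OF mdp \<pi>', of c h x "V_fun P c h \<gamma> \<pi>"] by simp
qed

lemma compact_prob_simplex: "compact (prob_simplex :: (real^'a::finite) set)"
proof -
  have "closed (prob_simplex :: (real^'a) set)"
    unfolding prob_simplex_def
    by (intro closed_Collect_conj closed_Collect_all closed_Collect_le closed_Collect_eq
          continuous_intros)
  moreover have "norm p \<le> 1" if "p \<in> prob_simplex" for p :: "real^'a"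
    using that norm_le_l1_cart[of p] unfolding prob_simplex_def by simp
  ultimately show ?thesis
    unfolding compact_eq_bounded_closed bounded_iff by blast
qed

lemma closed_fun_on_compact_bdd_below:
  fixes f :: "'b::heine_borel \<Rightarrow> real"
  assumes S: "compact S" and f: "closed_fun_on S f"
  shows "bdd_below (f ` S)"
proof (rule ccontr)
  assume unbounded: "\<not> bdd_below (f ` S)"
  define F where "F n = {x\<in>S. f x \<le> - real n}" for n :: nat
  have "compact (F n)" for n
  proof -
    have "F n = S \<inter> {x\<in>S. f x \<le> - real n}" unfolding F_def by blast
    then show ?thesis using f compact_Int_closed[OF S] unfolding closed_fun_on_def by metis
  qed
  moreover have "F n \<noteq> {}" for n
  proof -
    have "\<exists>x\<in>S. f x < - real n"
      using unbounded bdd_belowI2[of S "- real n" f] by (meson not_le)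
    then show ?thesis unfolding F_def by fastforce
  qed
  moreover have "F n \<subseteq> F m" if "m \<le> n" for m n
    using that unfolding F_def by auto
  ultimately obtain x where x: "x \<in> \<Inter> (range F)"
    using compact_nest[of F] by blast
  obtain n :: nat where "- f x < real n"
    using reals_Archimedean2 by blast
  moreover have "f x \<le> - real n"
    using x unfolding F_def by blast
  ultimately show False by linarith
qed

lemma abs_sum_mult_simplex_le:
  assumes "p \<in> prob_simplex"
  shows "\<bar>\<Sum>a\<in>UNIV. f a * p $ a\<bar> \<le> (\<Sum>a\<in>UNIV. \<bar>f a\<bar>)"
proof -
  have "p $ a \<le> 1" for a
    using assms member_le_sum[of a UNIV "\<lambda>b. p $ b"] unfolding prob_simplex_def by simp
  then have "\<bar>f a * p $ a\<bar> \<le> \<bar>f a\<bar>" for a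
    using assms unfolding prob_simplex_def by (simp add: abs_mult mult_left_le)
  then have "(\<Sum>a\<in>UNIV. \<bar>f a * p $ a\<bar>) \<le> (\<Sum>a\<in>UNIV. \<bar>f a\<bar>)"
    by (rule sum_mono)
  then show ?thesis
    using sum_abs[of "\<lambda>a. f a * p $ a" UNIV] by linarith
qed

lemma bdd_above_neg_sum_psi_fun:
  assumes "closed_fun_on prob_simplex (h y)"
  shows "bdd_above ((\<lambda>p. - (\<Sum>t<k. psi_fun P c h \<gamma> (\<pi>s t) y p)) ` prob_simplex)"
proof -
  obtain m where m: "\<And>p. p \<in> prob_simplex \<Longrightarrow> m \<le> h y p"
    using closed_fun_on_compact_bdd_below[OF compact_prob_simplex assms]
    unfolding bdd_below_def by auto
  have "- psi_fun P c h \<gamma> \<pi> y p \<le> (\<Sum>a\<in>UNIV. \<bar>Q_fun P c h \<gamma> \<pi> y a\<bar>)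
          + V_fun P c h \<gamma> \<pi> y - m + h y (\<pi> y)"
    if "p \<in> prob_simplex" for \<pi> p
    using abs_sum_mult_simplex_le[OF that, of "Q_fun P c h \<gamma> \<pi> y"] m[OF that]
    unfolding psi_fun_def by linarith
  then have "- (\<Sum>t<k. psi_fun P c h \<gamma> (\<pi>s t) y p)
      \<le> (\<Sum>t<k. (\<Sum>a\<in>UNIV. \<bar>Q_fun P c h \<gamma> (\<pi>s t) y a\<bar>)
                 + V_fun P c h \<gamma> (\<pi>s t) y - m + h y (\<pi>s t y))"
    if "p \<in> prob_simplex" for p
    using that by (simp only: sum_negf[symmetric]) (rule sum_mono)
  then show ?thesis by (rule bdd_aboveI2)
qed

lemma neg_sum_psi_fun_le_agg_gap:
  assumes "closed_fun_on prob_simplex (h y)" "p \<in> prob_simplex"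
  shows "- (\<Sum>t<k. psi_fun P c h \<gamma> (\<pi>s t) y p) \<le> agg_gap P c h \<gamma> k \<pi>s y"
  unfolding agg_gap_def
  by (rule cSUP_upper[OF assms(2) bdd_above_neg_sum_psi_fun[where h = h, OF assms(1)]])

lemma sum_value_gap_le_occupancy_agg_gap:
  assumes mdp: "is_mdp P \<gamma>"
    and h_closed: "\<forall>x. closed_fun_on prob_simplex (h x)"
    and \<pi>': "is_policy \<pi>'"
  shows "(\<Sum>t<k. V_fun P c h \<gamma> (\<pi>s t) x - V_fun P c h \<gamma> \<pi>' x)
    \<le> (\<Sum>y\<in>UNIV. occupancy P \<pi>' \<gamma> x y * agg_gap P c h \<gamma> k \<pi>s y)"
proof -
  let ?d = "occupancy P \<pi>' \<gamma> x"
  have "(\<Sum>t<k. V_fun P c h \<gamma> (\<pi>s t) x - V_fun P c h \<gamma> \<pi>' x)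
      = (\<Sum>t<k. \<Sum>y\<in>UNIV. ?d y * - psi_fun P c h \<gamma> (\<pi>s t) y (\<pi>' y))"
  proof (rule sum.cong[OF refl])
    fix t
    show "V_fun P c h \<gamma> (\<pi>s t) x - V_fun P c h \<gamma> \<pi>' x
        = (\<Sum>y\<in>UNIV. ?d y * - psi_fun P c h \<gamma> (\<pi>s t) y (\<pi>' y))"
      using performance_difference[OF mdp \<pi>', of c h x "\<pi>s t"] by (simp add: sum_negf)
  qed
  also have "\<dots> = (\<Sum>y\<in>UNIV. ?d y * - (\<Sum>t<k. psi_fun P c h \<gamma> (\<pi>s t) y (\<pi>' y)))"
    by (simp only: sum_negf[symmetric] sum_distrib_left) (rule sum.swap)
  also have "\<dots> \<le> (\<Sum>y\<in>UNIV. ?d y * agg_gap P c h \<gamma> k \<pi>s y)"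
    using h_closed \<pi>' occupancy_nonneg[OF mdp \<pi>']
    by (intro sum_mono mult_left_mono neg_sum_psi_fun_le_agg_gap) (auto simp: is_policy_def)
  finally show ?thesis .
qed

theorem proposition2p3:
  fixes P :: "'s::finite \<Rightarrow> 'a::finite \<Rightarrow> 's \<Rightarrow> real"
    and c :: "'s \<Rightarrow> 'a \<Rightarrow> real"
    and h :: "'s \<Rightarrow> real^'a \<Rightarrow> real"
    and \<gamma> :: real
    and pstar :: "'s \<Rightarrow> real^'a"
    and M :: "'w measure"
    and pol :: "nat \<Rightarrow> 'w \<Rightarrow> ('s \<Rightarrow> real^'a)"
    and k :: nat
    and s :: 's
  assumes mdp: "is_mdp P \<gamma>"
    and h_convex: "\<forall>x. convex_on prob_simplex (h x)"
    and h_closed: "\<forall>x. closed_fun_on prob_simplex (h x)"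
    and pstar_policy: "is_policy pstar"
    and pstar_opt: "\<forall>\<pi>. is_policy \<pi> \<longrightarrow> (\<forall>x. V_fun P c h \<gamma> pstar x \<le> V_fun P c h \<gamma> \<pi> x)"
    and prob: "prob_space M"
    and k_pos: "k \<ge> 1"
    and pol_policy: "\<forall>t<k. \<forall>\<omega>\<in>space M. is_policy (pol t \<omega>)"
    and V_int: "\<forall>t<k. \<forall>x. integrable M (\<lambda>\<omega>. V_fun P c h \<gamma> (pol t \<omega>) x)"
    and g_int: "\<forall>x. integrable M (\<lambda>\<omega>. agg_gap P c h \<gamma> k (\<lambda>t. pol t \<omega>) x)"
  shows "(\<Sum>t<k. (\<integral>\<omega>. (V_fun P c h \<gamma> (pol t \<omega>) s - V_fun P c h \<gamma> pstar s) \<partial>M))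
    \<le> (1 / (1 - \<gamma>)) * Max (range (\<lambda>x. (\<integral>\<omega>. agg_gap P c h \<gamma> k (\<lambda>t. pol t \<omega>) x \<partial>M)))"
proof -
  interpret prob_space M by (rule prob)
  let ?V = "V_fun P c h \<gamma>"
  let ?G = "\<lambda>\<omega>. agg_gap P c h \<gamma> k (\<lambda>t. pol t \<omega>)"
  let ?d = "occupancy P pstar \<gamma> s"
  let ?Max = "Max (range (\<lambda>x. (\<integral>\<omega>. ?G \<omega> x \<partial>M)))"
  have int_gap: "integrable M (\<lambda>\<omega>. ?V (pol t \<omega>) s - ?V pstar s)" if "t < k" for t
    using V_int that by auto
  have "(\<Sum>t<k. (\<integral>\<omega>. (?V (pol t \<omega>) s - ?V pstar s) \<partial>M))
      = (\<integral>\<omega>. (\<Sum>t<k. ?V (pol t \<omega>) s - ?V pstar s) \<partial>M)"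
    using int_gap by (simp add: Bochner_Integration.integral_sum)
  also have "\<dots> \<le> (\<integral>\<omega>. (\<Sum>y\<in>UNIV. ?d y * ?G \<omega> y) \<partial>M)"
    using int_gap g_int
    by (intro integral_mono sum_value_gap_le_occupancy_agg_gap[OF mdp h_closed pstar_policy]) auto
  also have "\<dots> = (\<Sum>y\<in>UNIV. ?d y * (\<integral>\<omega>. ?G \<omega> y \<partial>M))"
    using g_int by (simp add: Bochner_Integration.integral_sum)
  also have "\<dots> \<le> (\<Sum>y\<in>UNIV. ?d y * ?Max)"
    by (intro sum_mono mult_left_mono occupancy_nonneg[OF mdp pstar_policy] Max_ge) auto
  also have "\<dots> = (1 / (1 - \<gamma>)) * ?Max"
    using sum_occupancy[OF mdp pstar_policy, of s] by (simp add: sum_distrib_right[symmetric])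
  finally show ?thesis .
qed

end
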